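(* Let $\mathcal G$ be the graph defined below. There is no mixed $1$-stack $1$-queue layout $(<,\{S,Q\})$ of $\mathcal G$ for which there exist edges $(v_1,v_2)\in Q$, $(u_1,u_2)\in S$ and a pair of twins $s,t$ with $v_1<u_1<s<t<u_2<v_2$.
   Context: Graph $\mathcal G$: take two vertices $A,B$ and $19$ copies of a gadget $H$, identified at $A$ and $B$. Each copy of $H$ consists of two further vertices $s,t$ (called twins) joined by the twin edge $(s,t)$, the edges $(A,s),(A,t),(B,s),(B,t)$, and seven further vertices (called connectors), each of degree $2$ and adjacent to exactly $s$ and $t$. ($A$ and $B$ are not adjacent.) For a vertex ordering $<$ and an edge $e$, let $L(e)<R(e)$ be its endpoints; edges $e,f$ cross if $L(e)<L(f)<R(e)<R(f)$ and nest if $L(e)<L(f)<R(f)<R(e)$. A stack is an edge set with no two crossing edges, a queue an edge set with no two nested edges. A mixed $1$-stack $1$-queue layout is a vertex ordering $<$ together with a partition of the edge set into a stack $S$ and a queue $Q$. *)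

theory Defs
  imports Main
begin

text \<open>Vertices of the graph G: the two hubs A, B; for each copy i < 19 of the
gadget H the twins Sv i, Tv i and the connectors Cv i j (j < 7).\<close>
datatype vert = VA | VB | Sv nat | Tv nat | Cv nat nat

definition ncopies :: nat where "ncopies = 19"
definition nconn :: nat where "nconn = 7"

definition verts :: "vert set" where
  "verts = {VA, VB} \<union> {Sv i | i. i < ncopies} \<union> {Tv i | i. i < ncopies}
           \<union> {Cv i j | i j. i < ncopies \<and> j < nconn}"

definition edges :: "(vert \<times> vert) set" where
  "edges = {(Sv i, Tv i) | i. i < ncopies}
         \<union> {(VA, Sv i) | i. i < ncopies} \<union> {(VA, Tv i) | i. i < ncopies}
         \<union> {(VB, Sv i) | i. i < ncopies} \<union> {(VB, Tv i) | i. i < ncopies}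
         \<union> {(Sv i, Cv i j) | i j. i < ncopies \<and> j < nconn}
         \<union> {(Tv i, Cv i j) | i j. i < ncopies \<and> j < nconn}"

text \<open>A vertex ordering is given by an injective position map pos on verts.
L(e), R(e): positions of the left/right endpoint.\<close>
definition Lp :: "(vert \<Rightarrow> nat) \<Rightarrow> vert \<times> vert \<Rightarrow> nat" where
  "Lp pos e = min (pos (fst e)) (pos (snd e))"
definition Rp :: "(vert \<Rightarrow> nat) \<Rightarrow> vert \<times> vert \<Rightarrow> nat" where
  "Rp pos e = max (pos (fst e)) (pos (snd e))"

definition crosses :: "(vert \<Rightarrow> nat) \<Rightarrow> vert \<times> vert \<Rightarrow> vert \<times> vert \<Rightarrow> bool" where
  "crosses pos e f \<longleftrightarrow> Lp pos e < Lp pos f \<and> Lp pos f < Rp pos e \<and> Rp pos e < Rp pos f"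
definition nests :: "(vert \<Rightarrow> nat) \<Rightarrow> vert \<times> vert \<Rightarrow> vert \<times> vert \<Rightarrow> bool" where
  "nests pos e f \<longleftrightarrow> Lp pos e < Lp pos f \<and> Lp pos f < Rp pos f \<and> Rp pos f < Rp pos e"

definition is_stack :: "(vert \<Rightarrow> nat) \<Rightarrow> (vert \<times> vert) set \<Rightarrow> bool" where
  "is_stack pos S \<longleftrightarrow> (\<forall>e\<in>S. \<forall>f\<in>S. \<not> crosses pos e f)"
definition is_queue :: "(vert \<Rightarrow> nat) \<Rightarrow> (vert \<times> vert) set \<Rightarrow> bool" where
  "is_queue pos Q \<longleftrightarrow> (\<forall>e\<in>Q. \<forall>f\<in>Q. \<not> nests pos e f)"

definition mixed_layout ::
  "(vert \<Rightarrow> nat) \<Rightarrow> (vert \<times> vert) set \<Rightarrow> (vert \<times> vert) set \<Rightarrow> bool" where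
  "mixed_layout pos S Q \<longleftrightarrow> inj_on pos verts \<and> S \<union> Q = edges \<and> S \<inter> Q = {}
     \<and> is_stack pos S \<and> is_queue pos Q"

end

theory Submission
  imports Defs
begin

text \<open>Let the twins s < t lie under the stack edge f, which is nested in the queue edge e.
A connector c adjacent to s and t cannot put one of its two edges in S and the other in Q:
a stack edge at s or t must stay within f (else it crosses f), a queue edge must leave e
(else e nests it), and f lies strictly inside e. So every connector is a stack connector
or a queue connector. Two stack connectors c, d span a K_{2,2} with s, t on one page,
which forces exactly one of c, d strictly between s and t; two queue connectors must lie
on opposite sides of s and t, since otherwise two of their edges nest. Hence there are at
most two connectors of each kind, i.e. at most four, but the gadget has seven.\<close>

lemma Lp_pair [simp]: "Lp pos (a, b) = min (pos a) (pos b)"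
  and Rp_pair [simp]: "Rp pos (a, b) = max (pos a) (pos b)"
  by (simp_all add: Lp_def Rp_def)

lemma stack_edge_within:
  assumes "is_stack pos S" "f \<in> S" "(a, c) \<in> S"
    and "Lp pos f < pos a" "pos a < Rp pos f"
  shows "Lp pos f \<le> pos c \<and> pos c \<le> Rp pos f"
proof -
  have "\<not> crosses pos f (a, c)" "\<not> crosses pos (a, c) f"
    using assms(1-3) unfolding is_stack_def by blast+
  then show ?thesis
    using assms(4,5) unfolding crosses_def by (auto simp: min_def max_def split: if_splits)
qed

lemma queue_edge_beyond:
  assumes "is_queue pos Q" "e \<in> Q" "(a, c) \<in> Q"
    and "Lp pos e < pos a" "pos a < Rp pos e" "pos c \<noteq> pos a"
  shows "pos c \<le> Lp pos e \<or> Rp pos e \<le> pos c"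
proof -
  have "\<not> nests pos e (a, c)" using assms(1-3) unfolding is_queue_def by blast
  then show ?thesis
    using assms(4-6) unfolding nests_def by (auto simp: min_def max_def split: if_splits)
qed

lemma stack_K22_separates:
  assumes "is_stack pos S" "(a, c) \<in> S" "(b, c) \<in> S" "(a, d) \<in> S" "(b, d) \<in> S"
    and "pos a < pos b" "pos c \<noteq> pos d"
    and "pos c \<notin> {pos a, pos b}" "pos d \<notin> {pos a, pos b}"
  shows "(pos a < pos c \<and> pos c < pos b) \<noteq> (pos a < pos d \<and> pos d < pos b)"
proof -
  have "\<not> crosses pos (a, d) (b, c)" "\<not> crosses pos (b, c) (a, d)"
    "\<not> crosses pos (a, c) (b, d)" "\<not> crosses pos (b, d) (a, c)"
    using assms(1-5) unfolding is_stack_def by blast+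
  then show ?thesis using assms(6-9) unfolding crosses_def
    by (auto simp: min_def max_def split: if_splits)
qed

lemma queue_K22_separates:
  assumes "is_queue pos Q" "(a, c) \<in> Q" "(b, c) \<in> Q" "(a, d) \<in> Q" "(b, d) \<in> Q"
    and "pos a < pos b" "pos c \<noteq> pos d"
    and "pos c \<notin> {pos a..pos b}" "pos d \<notin> {pos a..pos b}"
  shows "(pos c < pos a) \<noteq> (pos d < pos a)"
proof -
  have "\<not> nests pos (a, d) (b, c)" "\<not> nests pos (b, c) (a, d)"
    "\<not> nests pos (a, c) (b, d)" "\<not> nests pos (b, d) (a, c)"
    using assms(1-5) unfolding is_queue_def by blast+
  then show ?thesis using assms(6-9) unfolding nests_def
    by (auto simp: min_def max_def split: if_splits)
qed

lemma common_neighbour_same_page: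
  assumes "is_stack pos S" "is_queue pos Q" "S \<inter> Q = {}" "e \<in> Q" "f \<in> S"
    and "Lp pos e < Lp pos f" "Lp pos f < pos s" "pos s < pos t"
    and "pos t < Rp pos f" "Rp pos f < Rp pos e"
    and "(s, c) \<in> S \<union> Q" "(t, c) \<in> S \<union> Q" "pos c \<noteq> pos s" "pos c \<noteq> pos t"
  shows "(s, c) \<in> S \<and> (t, c) \<in> S \<or> (s, c) \<in> Q \<and> (t, c) \<in> Q \<and> pos c \<notin> {pos s..pos t}"
proof -
  have within: "Lp pos f \<le> pos c \<and> pos c \<le> Rp pos f" if "(u, c) \<in> S" "u \<in> {s, t}" for u
    using stack_edge_within[OF assms(1,5) that(1)] that(2) assms(7-9) by auto
  have beyond: "pos c \<le> Lp pos e \<or> Rp pos e \<le> pos c" if "(u, c) \<in> Q" "u \<in> {s, t}" for u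
    using queue_edge_beyond[OF assms(2,4) that(1)] that(2) assms(6-10,13,14) by auto
  show ?thesis
    using within[of s] within[of t] beyond[of s] beyond[of t] assms(3,6-12) by fastforce
qed

lemma card_le_2_if_inj_on_bool:
  fixes f :: "'a \<Rightarrow> bool"
  assumes "inj_on f A"
  shows "card A \<le> 2"
  using card_inj_on_le[OF assms subset_UNIV] by simp

lemma card_common_neighbours_le_4:
  assumes "is_stack pos S" "is_queue pos Q" "S \<inter> Q = {}" "e \<in> Q" "f \<in> S"
    and "Lp pos e < Lp pos f" "Lp pos f < pos s" "pos s < pos t"
    and "pos t < Rp pos f" "Rp pos f < Rp pos e"
    and "\<forall>c\<in>N. (s, c) \<in> S \<union> Q \<and> (t, c) \<in> S \<union> Q"
    and "inj_on pos (insert s (insert t N))" "s \<notin> N" "t \<notin> N"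
  shows "card N \<le> 4"
proof -
  have apart_from_twins: "pos c \<noteq> pos s" "pos c \<noteq> pos t" if "c \<in> N" for c
    using assms(12-14) that by (metis inj_onD insertCI)+
  have pos_injective: "pos c \<noteq> pos d" if "c \<in> N" "d \<in> N" "c \<noteq> d" for c d
    using assms(12) that by (auto dest: inj_onD)
  note page = common_neighbour_same_page[OF assms(1-10) _ _ apart_from_twins]
  define NS where "NS = {c \<in> N. (s, c) \<in> S}"
  define NQ where "NQ = {c \<in> N. (s, c) \<in> Q}"
  have NS: "c \<in> N" "(s, c) \<in> S" "(t, c) \<in> S" if "c \<in> NS" for c
    using that page assms(3,11) unfolding NS_def by blast+
  have NQ: "c \<in> N" "(s, c) \<in> Q" "(t, c) \<in> Q" "pos c \<notin> {pos s..pos t}" if "c \<in> NQ" for c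
    using that page assms(3,11) unfolding NQ_def by blast+
  have "inj_on (\<lambda>c. pos s < pos c \<and> pos c < pos t) NS"
  proof (rule inj_onI, rule ccontr)
    fix c d assume c: "c \<in> NS" and d: "d \<in> NS" and "c \<noteq> d"
      and "(pos s < pos c \<and> pos c < pos t) = (pos s < pos d \<and> pos d < pos t)"
    moreover have "pos c \<noteq> pos d" "pos c \<notin> {pos s, pos t}" "pos d \<notin> {pos s, pos t}"
      using apart_from_twins pos_injective NS(1) c d \<open>c \<noteq> d\<close> by auto
    ultimately show False
      using stack_K22_separates[OF assms(1) NS(2,3)[OF c] NS(2,3)[OF d] assms(8)] by blast
  qed
  then have "card NS \<le> 2" by (rule card_le_2_if_inj_on_bool)
  have "inj_on (\<lambda>c. pos c < pos s) NQ"
  proof (rule inj_onI, rule ccontr)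
    fix c d assume c: "c \<in> NQ" and d: "d \<in> NQ" and "c \<noteq> d"
      and "(pos c < pos s) = (pos d < pos s)"
    moreover have "pos c \<noteq> pos d"
      using pos_injective NQ(1) c d \<open>c \<noteq> d\<close> by auto
    ultimately show False
      using queue_K22_separates[OF assms(2) NQ(2,3)[OF c] NQ(2,3)[OF d] assms(8)] NQ(4) c d
      by blast
  qed
  then have "card NQ \<le> 2" by (rule card_le_2_if_inj_on_bool)
  have "N = NS \<union> NQ"
    using assms(11) unfolding NS_def NQ_def by blast
  then have "card N \<le> card NS + card NQ" by (simp add: card_Un_le)
  with \<open>card NS \<le> 2\<close> \<open>card NQ \<le> 2\<close> show ?thesis by linarith
qed

lemma twins_not_under_stack_edge_in_queue_edge:
  assumes layout: "mixed_layout pos S Q" and "e \<in> Q" "f \<in> S"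
    and i: "i < ncopies" and twins: "{s, t} = {Sv i, Tv i}"
    and order: "Lp pos e < Lp pos f" "Lp pos f < pos s" "pos s < pos t"
      "pos t < Rp pos f" "Rp pos f < Rp pos e"
  shows False
proof -
  have stack: "is_stack pos S" and queue: "is_queue pos Q" and "S \<inter> Q = {}"
    using layout unfolding mixed_layout_def by auto
  define N where "N = Cv i ` {..<nconn}"
  have "card N = 7"
    unfolding N_def nconn_def by (simp add: card_image inj_on_def)
  have "\<forall>c\<in>N. (s, c) \<in> S \<union> Q \<and> (t, c) \<in> S \<union> Q"
    using layout twins i unfolding mixed_layout_def N_def edges_def doubleton_eq_iff by auto
  moreover have "insert s (insert t N) \<subseteq> verts"
    using twins i unfolding N_def verts_def doubleton_eq_iff by auto
  then have "inj_on pos (insert s (insert t N))"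
    using layout inj_on_subset unfolding mixed_layout_def by blast
  moreover have "s \<notin> N" "t \<notin> N"
    using twins unfolding N_def doubleton_eq_iff by auto
  ultimately have "card N \<le> 4"
    using card_common_neighbours_le_4
        [OF stack queue \<open>S \<inter> Q = {}\<close> \<open>e \<in> Q\<close> \<open>f \<in> S\<close> order]
    by blast
  with \<open>card N = 7\<close> show False by simp
qed

theorem lemma2:
  shows "\<not> (\<exists>pos S Q. mixed_layout pos S Q \<and>
           (\<exists>e\<in>Q. \<exists>f\<in>S. \<exists>i<ncopies. \<exists>s t. {s, t} = {Sv i, Tv i} \<and>
              Lp pos e < Lp pos f \<and> Lp pos f < pos s \<and> pos s < pos t \<and>
              pos t < Rp pos f \<and> Rp pos f < Rp pos e))"
  using twins_not_under_stack_edge_in_queue_edge by blast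

end
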